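(* Let $C=C(m,n;k,l;c,d)$ be a $C$-shaped supergrid graph and $s,t$ two distinct vertices of $C$ labeled so that $s_x\leq t_x$. If $C$ has a Hamiltonian path from $s$ to $t$, then $(C,s,t)$ satisfies none of the conditions (F1), (F3), (F7), (F8), (F9), where: (F1) $s$ or $t$ is a cut vertex of $C$, or $\{s,t\}$ is a vertex cut of $C$; (F3) there is a vertex $w\in V(C)$ with $\deg(w)=1$, $w\neq s$, $w\neq t$; (F7) $m=3$, $a=2$, and either ($c=1$ and $\{s,t\}=\{(1,1),(2,2)\}$ or $\{(1,2),(2,1)\}$) or ($d=1$ and $\{s,t\}=\{(1,n),(2,n-1)\}$ or $\{(1,n-1),(2,n)\}$); (F8) $n=3$, $k=c=d=1$, and one of: (1) $a\geq 2$, $s_x=t_x=m-1$, $|s_y-t_y|=2$; (2) $a=2$, $s_x=1$, $t_x=2$, $|s_y-t_y|=2$; (3) $a>2$, $s_x<m-1$, $t=(m-1,2)$; (F9) $a=1$, and ($s_y,t_y\leq c$ or $s_y,t_y>c+l$).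
   Context: The supergrid graph $S^\infty$ has vertex set $\mathbb{Z}^2$, two distinct vertices $u,v$ being adjacent iff $|u_x-v_x|\leq 1$ and $|u_y-v_y|\leq 1$; a supergrid graph is a finite vertex-induced subgraph of $S^\infty$. For integers $m\geq 2$, $n\geq 3$, $k,l,c\geq 1$ with $d=n-l-c\geq 1$ and $a=m-k\geq 1$, $C(m,n;k,l;c,d)$ is the supergrid graph induced by $\{(x,y):1\leq x\leq m,\ 1\leq y\leq n\}\setminus\{(x,y): a+1\leq x\leq m,\ c+1\leq y\leq c+l\}$. A cut vertex $v$: $C-v$ disconnected; a vertex cut $V_1$: $C-V_1$ disconnected. A Hamiltonian path from $s$ to $t$ is a simple path from $s$ to $t$ visiting every vertex exactly once. The paper assumes throughout that the given vertices are named so that $s_x\leq t_x$. *)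

theory Defs
  imports Main
begin

type_synonym vtx = "int \<times> int"

definition sg_adj :: "vtx \<Rightarrow> vtx \<Rightarrow> bool" where
  "sg_adj u v \<longleftrightarrow> u \<noteq> v \<and> \<bar>fst u - fst v\<bar> \<le> 1 \<and> \<bar>snd u - snd v\<bar> \<le> 1"

text \<open>Vertex set of C(m,n;k,l;c,d), with a = m - k.\<close>
definition C_shape :: "int \<Rightarrow> int \<Rightarrow> int \<Rightarrow> int \<Rightarrow> int \<Rightarrow> vtx set" where
  "C_shape m n k l c =
     {(x,y). 1 \<le> x \<and> x \<le> m \<and> 1 \<le> y \<and> y \<le> n}
     - {(x,y). m - k + 1 \<le> x \<and> x \<le> m \<and> c + 1 \<le> y \<and> y \<le> c + l}"

definition sg_connected :: "vtx set \<Rightarrow> bool" where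
  "sg_connected V \<longleftrightarrow>
     (\<forall>u\<in>V. \<forall>v\<in>V. (\<lambda>x y. x \<in> V \<and> y \<in> V \<and> sg_adj x y)\<^sup>*\<^sup>* u v)"

definition cut_vertex :: "vtx set \<Rightarrow> vtx \<Rightarrow> bool" where
  "cut_vertex V v \<longleftrightarrow> v \<in> V \<and> \<not> sg_connected (V - {v})"

definition vertex_cut :: "vtx set \<Rightarrow> vtx set \<Rightarrow> bool" where
  "vertex_cut V W \<longleftrightarrow> W \<subseteq> V \<and> \<not> sg_connected (V - W)"

definition sg_degree :: "vtx set \<Rightarrow> vtx \<Rightarrow> nat" where
  "sg_degree V w = card {u \<in> V. sg_adj w u}"

definition ham_path :: "vtx set \<Rightarrow> vtx \<Rightarrow> vtx \<Rightarrow> bool" where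
  "ham_path V s t \<longleftrightarrow> (\<exists>ps. ps \<noteq> [] \<and> distinct ps \<and> set ps = V \<and>
      hd ps = s \<and> last ps = t \<and>
      (\<forall>i. Suc i < length ps \<longrightarrow> sg_adj (ps ! i) (ps ! Suc i)))"

end

theory Submission
  imports Defs
begin

(*
  (F1) and (F3) fail for every Hamiltonian path: deleting one or both end vertices leaves a
  subpath, hence a connected graph, and every interior vertex has two distinct neighbours on
  the path.

  The other conditions are refuted by forced segments. A vertex that is not an end and has
  only two neighbours must be visited between them; near a corner of C this fixes the positions
  of a few vertices at the start or the end of the path, and the count of vertices or the
  injectivity of positions gives a contradiction. For (F9), when a = 1 the column x = 1 is the
  only passage between the two arms, so a path with both ends in one arm would have to enter
  the other arm through the same vertex from both of its ends. The reflection y -> n + 1 - y,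
  which exchanges c and d, halves the number of configurations.
*)

lemma sg_adj_commute: "sg_adj u v \<longleftrightarrow> sg_adj v u"
  by (auto simp: sg_adj_def abs_minus_commute)

lemma successively_sg_adj_rtranclp:
  assumes "successively sg_adj xs" "set xs \<subseteq> A" "u \<in> set xs" "v \<in> set xs"
  shows "(\<lambda>x y. x \<in> A \<and> y \<in> A \<and> sg_adj x y)\<^sup>*\<^sup>* u v"
  using assms
proof (induction xs arbitrary: u v rule: induct_list012)
  case (3 x y xs)
  let ?E = "\<lambda>x y. x \<in> A \<and> y \<in> A \<and> sg_adj x y"
  have xy: "?E x y" "?E y x" using "3.prems"(1,2) by (auto simp: sg_adj_commute)
  have IH: "?E\<^sup>*\<^sup>* p q" if "p \<in> set (y # xs)" "q \<in> set (y # xs)" for p q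
    using "3.IH"(2) "3.prems"(1,2) that by simp
  have to_x: "?E\<^sup>*\<^sup>* p x" if "p \<in> set (x # y # xs)" for p
  proof (cases "p = x")
    case False
    then have "?E\<^sup>*\<^sup>* p y" using that IH by simp
    then show ?thesis using xy(2) by (rule rtranclp.rtrancl_into_rtrancl)
  qed simp
  have from_x: "?E\<^sup>*\<^sup>* x q" if "q \<in> set (x # y # xs)" for q
  proof (cases "q = x")
    case False
    then have "?E\<^sup>*\<^sup>* y q" using that IH by simp
    with xy(1) show ?thesis by (rule converse_rtranclp_into_rtranclp)
  qed simp
  show ?case
    using "3.prems"(3,4) IH to_x from_x by (cases "u = x"; cases "v = x") auto
qed auto

lemma sg_connected_set_walk: "successively sg_adj xs \<Longrightarrow> sg_connected (set xs)"
  unfolding sg_connected_def using successively_sg_adj_rtranclp by blast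

lemma successively_enters_through:
  assumes "successively E xs" "xs ! 0 \<notin> R" "j < length xs" "xs ! j \<in> R"
    and "\<And>x y. E x y \<Longrightarrow> x \<notin> R \<Longrightarrow> y \<in> R \<Longrightarrow> y = w"
  shows "\<exists>i\<le>j. xs ! i = w"
proof -
  obtain k where "k < j" "xs ! k \<notin> R" "xs ! Suc k \<in> R"
    using ex_least_nat_less[of "\<lambda>i. xs ! i \<in> R" j] assms(2,4) by auto
  moreover have "E (xs ! k) (xs ! Suc k)"
    using successively_nth[OF assms(1)] \<open>k < j\<close> assms(3) by simp
  ultimately show ?thesis using assms(5) Suc_leI by blast
qed

locale ham_path_list =
  fixes V :: "vtx set" and s t :: vtx and ps :: "vtx list"
  assumes ps_ne: "ps \<noteq> []" and distinct_ps: "distinct ps" and set_ps: "set ps = V"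
    and hd_ps: "hd ps = s" and last_ps: "last ps = t" and walk_ps: "successively sg_adj ps"

lemma ham_path_iff_list: "ham_path V s t \<longleftrightarrow> (\<exists>ps. ham_path_list V s t ps)"
  unfolding ham_path_def ham_path_list_def successively_conv_nth by blast

lemma ham_path_ends_mem: "ham_path V s t \<Longrightarrow> s \<in> V \<and> t \<in> V"
  unfolding ham_path_def by auto

lemma ham_path_image:
  assumes "ham_path V s t" "inj_on f V" "\<And>u v. sg_adj (f u) (f v) \<longleftrightarrow> sg_adj u v"
  shows "ham_path (f ` V) (f s) (f t)"
proof -
  obtain ps where "ham_path_list V s t ps" using assms(1) ham_path_iff_list by blast
  then have "ham_path_list (f ` V) (f s) (f t) (map f ps)"
    using assms(2,3) by (auto simp: ham_path_list_def distinct_map hd_map last_map successively_map)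
  then show ?thesis using ham_path_iff_list by blast
qed

lemma ham_path_connected_Diff_ends:
  assumes "ham_path V s t" "s \<noteq> t"
  shows "sg_connected (V - {s})" "sg_connected (V - {t})" "sg_connected (V - {s, t})"
proof -
  obtain ps where "ham_path_list V s t ps" using assms(1) ham_path_iff_list by blast
  then interpret ham_path_list V s t ps .
  define ys where "ys = butlast (tl ps)"
  have "tl ps \<noteq> []" using ps_ne hd_ps last_ps assms(2) by (cases ps) auto
  then have ps_eq: "ps = s # ys @ [t]"
    using ps_ne hd_ps last_ps unfolding ys_def by (metis append_butlast_last_id last_tl list.collapse)
  then have sets: "V - {s} = set (ys @ [t])" "V - {t} = set (s # ys)" "V - {s, t} = set ys"
    using distinct_ps set_ps by auto
  have "successively sg_adj ((s # ys) @ [t])" "successively sg_adj (s # (ys @ [t]))"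
    using walk_ps ps_eq by simp_all
  then have "successively sg_adj (s # ys)" "successively sg_adj (ys @ [t])"
    unfolding successively_append_iff successively_Cons[of _ s] by simp_all
  moreover have "successively sg_adj ys"
    using \<open>successively sg_adj (ys @ [t])\<close> by (simp add: successively_append_iff)
  ultimately show "sg_connected (V - {s})" "sg_connected (V - {t})" "sg_connected (V - {s, t})"
    unfolding sets using sg_connected_set_walk by blast+
qed

definition sg_neighbours :: "vtx set \<Rightarrow> vtx \<Rightarrow> vtx set" where
  "sg_neighbours V v = {u \<in> V. sg_adj v u}"

context ham_path_list
begin

definition pos :: "vtx \<Rightarrow> nat" where
  "pos v = (THE i. i < length ps \<and> ps ! i = v)"

lemma pos_nth: "i < length ps \<Longrightarrow> pos (ps ! i) = i"
  unfolding pos_def using distinct_ps by (intro the_equality) (auto simp: nth_eq_iff_index_eq)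

lemma
  assumes "v \<in> V"
  shows pos_less: "pos v < length ps" and nth_pos: "ps ! pos v = v"
proof -
  obtain i where "i < length ps" "ps ! i = v" using assms set_ps by (auto simp: in_set_conv_nth)
  then show "pos v < length ps" "ps ! pos v = v" using pos_nth by auto
qed

lemma pos_eq_iff: "u \<in> V \<Longrightarrow> v \<in> V \<Longrightarrow> pos u = pos v \<longleftrightarrow> u = v"
  using nth_pos by metis

lemma start_mem: "s \<in> V" and end_mem: "t \<in> V"
  using ps_ne hd_ps last_ps set_ps by auto

lemma pos_start: "pos s = 0"
  using ps_ne hd_ps pos_nth[of 0] by (simp add: hd_conv_nth)

lemma pos_end: "pos t + 1 = length ps"
  using ps_ne last_ps pos_nth[of "length ps - 1"] by (simp add: last_conv_nth)

lemma card_le_length: "A \<subseteq> V \<Longrightarrow> card A \<le> length ps"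
  by (metis card_mono distinct_card distinct_ps finite_set set_ps)

lemma path_neighbours_interior:
  assumes "v \<in> V" "v \<noteq> s" "v \<noteq> t"
  shows "\<exists>a\<in>sg_neighbours V v. \<exists>b\<in>sg_neighbours V v. a \<noteq> b \<and> pos a + 1 = pos v \<and> pos b = pos v + 1"
proof -
  define i where "i = pos v - 1"
  have i: "Suc i = pos v" using assms pos_start pos_eq_iff start_mem unfolding i_def by fastforce
  have "pos v \<noteq> pos t" using assms pos_eq_iff end_mem by blast
  then have v_succ: "Suc (pos v) < length ps" using pos_end pos_less[OF assms(1)] by linarith
  let ?a = "ps ! i" and ?b = "ps ! Suc (pos v)"
  have "sg_adj ?a v" using successively_nth[OF walk_ps, of i] i v_succ nth_pos[OF assms(1)] by simp
  moreover have "sg_adj v ?b"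
    using successively_nth[OF walk_ps, of "pos v"] v_succ nth_pos[OF assms(1)] by simp
  ultimately have "sg_adj v ?a" "sg_adj v ?b" using sg_adj_commute by blast+
  moreover have "?a \<in> V" "?b \<in> V" using i v_succ set_ps by auto
  moreover have "?a \<noteq> ?b" using i v_succ distinct_ps by (simp add: nth_eq_iff_index_eq)
  moreover have "pos ?a + 1 = pos v" "pos ?b = pos v + 1" using i v_succ pos_nth by auto
  ultimately show ?thesis unfolding sg_neighbours_def by blast
qed

lemma two_path_neighbours:
  assumes "v \<in> V" "v \<noteq> s" "v \<noteq> t" "sg_neighbours V v \<subseteq> {a, b}"
  shows "pos a + 1 = pos v \<and> pos b = pos v + 1 \<or> pos b + 1 = pos v \<and> pos a = pos v + 1"
  using path_neighbours_interior[OF assms(1-3)] assms(4) by blast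

lemma path_neighbours_before_end:
  assumes "v \<in> V" "v \<noteq> s" "v \<noteq> t" "sg_neighbours V v \<subseteq> {u, t}"
  shows "pos v + 2 = length ps" "pos u + 3 = length ps"
  using two_path_neighbours[OF assms] pos_end pos_less[OF assms(1)] by auto

lemma path_neighbours_after_start:
  assumes "v \<in> V" "v \<noteq> s" "v \<noteq> t" "sg_neighbours V v \<subseteq> {s, u}"
  shows "pos v = 1" "pos u = 2"
  using two_path_neighbours[OF assms] pos_start by auto

lemma start_successor:
  assumes "2 \<le> length ps"
  shows "\<exists>u\<in>sg_neighbours V s. pos u = 1"
proof -
  have "sg_adj (ps ! 0) (ps ! 1)" using successively_nth[OF walk_ps] assms by simp
  moreover have "ps ! 0 = s" using ps_ne hd_ps by (simp add: hd_conv_nth)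
  moreover have "ps ! 1 \<in> V" "pos (ps ! 1) = 1" using set_ps assms pos_nth by auto
  ultimately show ?thesis unfolding sg_neighbours_def by blast
qed

lemma region_with_single_entrance:
  assumes gate: "\<And>x y. x \<in> V \<Longrightarrow> y \<in> V \<Longrightarrow> sg_adj x y \<Longrightarrow> x \<notin> R \<Longrightarrow> y \<in> R \<Longrightarrow> y = w"
    and "s \<notin> R" "t \<notin> R"
  shows "V \<inter> R \<subseteq> {w}"
proof
  fix u assume u: "u \<in> V \<inter> R"
  let ?E = "\<lambda>x y. x \<in> V \<and> y \<in> V \<and> sg_adj x y"
  let ?L = "length ps"
  have walk: "successively ?E ps" "successively ?E (rev ps)"
    using walk_ps set_ps by (auto elim: successively_mono simp: sg_adj_commute)
  have "ps ! 0 \<notin> R" "rev ps ! 0 \<notin> R"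
    using ps_ne hd_ps last_ps assms(2,3) by (simp_all add: hd_conv_nth last_conv_nth rev_nth)
  moreover have u_pos: "pos u < ?L" "ps ! pos u = u" using u pos_less nth_pos by auto
  moreover have "?L - 1 - pos u < length (rev ps)" "rev ps ! (?L - 1 - pos u) = u"
    using u_pos by (auto simp: rev_nth Suc_diff_Suc)
  moreover have "\<And>x y. ?E x y \<Longrightarrow> x \<notin> R \<Longrightarrow> y \<in> R \<Longrightarrow> y = w" using gate by blast
  \<comment> \<open>Read from either end, the path first enters \<open>R\<close> at \<open>w\<close>, and not after \<open>u\<close>;
    so \<open>w\<close> lies both before and after \<open>u\<close> on the path.\<close>
  ultimately obtain i j where "i \<le> pos u" "ps ! i = w" "j \<le> ?L - 1 - pos u" "rev ps ! j = w"
    using successively_enters_through[OF walk(1), of R "pos u" w]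
      successively_enters_through[OF walk(2), of R "?L - 1 - pos u" w] u
    by (metis IntD2)
  then have "ps ! i = ps ! (?L - 1 - j)" using u_pos by (simp add: rev_nth)
  then have "i = ?L - 1 - j" using distinct_ps u_pos \<open>i \<le> pos u\<close> by (simp add: nth_eq_iff_index_eq)
  then have "i = pos u" using \<open>i \<le> pos u\<close> \<open>j \<le> ?L - 1 - pos u\<close> u_pos(1) by linarith
  then show "u \<in> {w}" using \<open>ps ! i = w\<close> u_pos by simp
qed

end

lemma ham_path_interior_degree:
  assumes "ham_path V s t" "w \<in> V" "w \<noteq> s" "w \<noteq> t"
  shows "2 \<le> sg_degree V w"
proof -
  obtain ps where "ham_path_list V s t ps" using assms(1) ham_path_iff_list by blast
  then interpret ham_path_list V s t ps .
  obtain a b where "a \<in> sg_neighbours V w" "b \<in> sg_neighbours V w" "a \<noteq> b"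
    using path_neighbours_interior[OF assms(2-4)] by blast
  moreover have "finite V" using set_ps by auto
  then have "finite (sg_neighbours V w)" by (simp add: sg_neighbours_def)
  ultimately have "card {a, b} \<le> card (sg_neighbours V w)" by (intro card_mono) auto
  then show ?thesis using \<open>a \<noteq> b\<close> by (simp add: sg_degree_def sg_neighbours_def)
qed

definition flip_rows :: "int \<Rightarrow> vtx \<Rightarrow> vtx" where
  "flip_rows n v = (fst v, n + 1 - snd v)"

lemma sg_adj_flip_rows: "sg_adj (flip_rows n u) (flip_rows n v) \<longleftrightarrow> sg_adj u v"
  by (auto simp: flip_rows_def sg_adj_def prod_eq_iff abs_minus_commute)

lemma flip_rows_C_shape: "flip_rows n ` C_shape m n k l c = C_shape m n k l (n - l - c)"
proof -
  have "flip_rows n (flip_rows n v) = v" for v by (simp add: flip_rows_def)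
  moreover have "flip_rows n v \<in> C_shape m n k l (n - l - c)" if "v \<in> C_shape m n k l c" for v
    using that by (auto simp: flip_rows_def C_shape_def)
  moreover have "flip_rows n v \<in> C_shape m n k l c" if "v \<in> C_shape m n k l (n - l - c)" for v
    using that by (auto simp: flip_rows_def C_shape_def)
  ultimately show ?thesis by (metis image_eqI subsetI subset_antisym image_subsetI)
qed

lemma ham_path_flip_rows:
  assumes "ham_path (C_shape m n k l c) s t"
  shows "ham_path (C_shape m n k l (n - l - c)) (flip_rows n s) (flip_rows n t)"
proof -
  have "inj_on (flip_rows n) (C_shape m n k l c)" by (auto simp: inj_on_def flip_rows_def prod_eq_iff)
  from ham_path_image[OF assms this] show ?thesis by (simp add: sg_adj_flip_rows flip_rows_C_shape)
qed

lemma ham_path_ends_not_in_lower_arm: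
  assumes "ham_path (C_shape m n (m - 1) l c) s t" "c \<ge> 1" "l \<ge> 1" "n - l - c \<ge> 1"
  shows "\<not> (snd s \<le> c \<and> snd t \<le> c)"
proof
  let ?V = "C_shape m n (m - 1) l c"
  assume st: "snd s \<le> c \<and> snd t \<le> c"
  obtain ps where "ham_path_list ?V s t ps" using assms(1) ham_path_iff_list by blast
  then interpret ham_path_list ?V s t ps .
  have "?V \<inter> {v. c < snd v} \<subseteq> {(1, c + 1)}"
    by (rule region_with_single_entrance) (use st assms in \<open>auto simp: C_shape_def sg_adj_def\<close>)
  moreover have "1 \<le> m" using end_mem by (auto simp: C_shape_def)
  then have "(1, n) \<in> ?V \<inter> {v. c < snd v}" using assms by (auto simp: C_shape_def)
  ultimately show False using assms by auto
qed

lemma ham_path_not_F9: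
  assumes "ham_path (C_shape m n k l c) s t" "c \<ge> 1" "l \<ge> 1" "n - l - c \<ge> 1"
  shows "\<not> (m - k = 1 \<and> ((snd s \<le> c \<and> snd t \<le> c) \<or> (snd s > c + l \<and> snd t > c + l)))"
proof
  assume F9: "m - k = 1 \<and> ((snd s \<le> c \<and> snd t \<le> c) \<or> (snd s > c + l \<and> snd t > c + l))"
  then have "k = m - 1" by simp
  then have "ham_path (C_shape m n (m - 1) l c) s t" using assms(1) by simp
  from ham_path_ends_not_in_lower_arm[OF this assms(2-4)]
    ham_path_ends_not_in_lower_arm[OF ham_path_flip_rows[OF this]]
  show False using F9 assms(2-4) by (auto simp: flip_rows_def)
qed

lemma no_ham_path_F7_diagonal:
  assumes "l \<ge> 1" "n - l \<ge> 2"
  shows "\<not> ham_path (C_shape 3 n 1 l 1) (1, 1) (2, 2)"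
proof
  let ?V = "C_shape 3 n 1 l 1"
  assume "ham_path ?V (1, 1) (2, 2)"
  then obtain ps where "ham_path_list ?V (1, 1) (2, 2) ps" using ham_path_iff_list by blast
  then interpret ham_path_list ?V "(1, 1)" "(2, 2)" ps .
  have in_V: "{(1, 1), (1, 2), (1, 3), (2, 1), (2, 2), (3, 1)} \<subseteq> ?V"
    using assms by (auto simp: C_shape_def)
  then have L: "6 \<le> length ps" using card_le_length[OF in_V] by simp
  have "sg_neighbours ?V (3, 1) \<subseteq> {(2, 1), (2, 2)}"
    using assms by (auto simp: C_shape_def sg_neighbours_def sg_adj_def)
  then have end_segment: "pos (3, 1) + 2 = length ps" "pos (2, 1) + 3 = length ps"
    using path_neighbours_before_end in_V by auto
  obtain a where "a \<in> sg_neighbours ?V (2, 1)" "pos a + 1 = pos (2, 1)"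
    using path_neighbours_interior[of "(2, 1)"] in_V by auto
  moreover have "sg_neighbours ?V (2, 1) \<subseteq> {(1, 1), (1, 2), (2, 2), (3, 1)}"
    using assms by (auto simp: C_shape_def sg_neighbours_def sg_adj_def)
  ultimately have "pos (1, 2) + 4 = length ps" using end_segment pos_start pos_end L by auto
  obtain z where "z \<in> sg_neighbours ?V (1, 1)" "pos z = 1" using start_successor L by auto
  moreover have "sg_neighbours ?V (1, 1) \<subseteq> {(1, 2), (2, 1), (2, 2)}"
    using assms by (auto simp: C_shape_def sg_neighbours_def sg_adj_def)
  ultimately show False using \<open>pos (1, 2) + 4 = length ps\<close> end_segment pos_end L by auto
qed

lemma no_ham_path_F7_antidiagonal:
  assumes "l \<ge> 1" "n - l \<ge> 2"
  shows "\<not> ham_path (C_shape 3 n 1 l 1) (1, 2) (2, 1)"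
proof
  let ?V = "C_shape 3 n 1 l 1"
  assume "ham_path ?V (1, 2) (2, 1)"
  then obtain ps where "ham_path_list ?V (1, 2) (2, 1) ps" using ham_path_iff_list by blast
  then interpret ham_path_list ?V "(1, 2)" "(2, 1)" ps .
  have in_V: "{(1, 1), (1, 2), (1, 3), (2, 1), (2, 2), (3, 1)} \<subseteq> ?V"
    using assms by (auto simp: C_shape_def)
  then have L: "6 \<le> length ps" using card_le_length[OF in_V] by simp
  have "sg_neighbours ?V (3, 1) \<subseteq> {(2, 2), (2, 1)}"
    using assms by (auto simp: C_shape_def sg_neighbours_def sg_adj_def)
  then have end_segment: "pos (3, 1) + 2 = length ps" "pos (2, 2) + 3 = length ps"
    using path_neighbours_before_end in_V by auto
  have nbrs: "sg_neighbours ?V (1, 1) \<subseteq> {(1, 2), (2, 1), (2, 2)}"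
    using assms by (auto simp: C_shape_def sg_neighbours_def sg_adj_def)
  obtain a b where ab: "a \<in> sg_neighbours ?V (1, 1)" "b \<in> sg_neighbours ?V (1, 1)" "a \<noteq> b"
    and pos_ab: "pos a + 1 = pos (1, 1)" "pos b = pos (1, 1) + 1"
    using path_neighbours_interior[of "(1, 1)"] in_V by auto
  have a: "a \<in> {(1, 2), (2, 1), (2, 2)}" and b: "b \<in> {(1, 2), (2, 1), (2, 2)}" using ab nbrs by auto
  have "pos (1, 1) \<noteq> pos (3, 1)" "pos (1, 1) < length ps" using in_V pos_eq_iff pos_less by auto
  then have "a = (1, 2)" using a pos_ab end_segment pos_end by auto
  then have "pos b = 2" using pos_ab pos_start by simp
  then show False using b ab(3) \<open>a = (1, 2)\<close> end_segment pos_end L by auto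
qed

lemma ham_path_not_F7:
  assumes "ham_path (C_shape m n k l c) s t" "fst s \<le> fst t" "c \<ge> 1" "l \<ge> 1" "n - l - c \<ge> 1"
  shows "\<not> (m = 3 \<and> m - k = 2 \<and>
            ((c = 1 \<and> ({s, t} = {(1, 1), (2, 2)} \<or> {s, t} = {(1, 2), (2, 1)})) \<or>
             (n - l - c = 1 \<and> ({s, t} = {(1, n), (2, n - 1)} \<or> {s, t} = {(1, n - 1), (2, n)}))))"
    (is "\<not> (_ \<and> _ \<and> ?F7)")
proof (rule notI, elim conjE)
  assume "m = 3" "m - k = 2" ?F7
  then have hp: "ham_path (C_shape 3 n 1 l c) s t" using assms(1) by simp
  have lower: "{s', t'} \<noteq> {(1, 1), (2, 2)} \<and> {s', t'} \<noteq> {(1, 2), (2, 1)}"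
    if "ham_path (C_shape 3 n 1 l 1) s' t'" "fst s' \<le> fst t'" "n - l \<ge> 2" for s' t'
    using that no_ham_path_F7_diagonal no_ham_path_F7_antidiagonal assms(4)
    by (auto simp: doubleton_eq_iff)
  have "c = 1 \<Longrightarrow> {s, t} \<noteq> {(1, 1), (2, 2)} \<and> {s, t} \<noteq> {(1, 2), (2, 1)}"
    using lower[of s t] hp assms(2,5) by simp
  moreover have "{s, t} \<noteq> {(1, n), (2, n - 1)} \<and> {s, t} \<noteq> {(1, n - 1), (2, n)}" if "n - l - c = 1"
  proof -
    have "ham_path (C_shape 3 n 1 l 1) (flip_rows n s) (flip_rows n t)"
      using ham_path_flip_rows[OF hp] that by simp
    from lower[OF this] show ?thesis
      using assms(2,3) that by (auto simp: flip_rows_def doubleton_eq_iff)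
  qed
  ultimately show False using \<open>?F7\<close> by blast
qed

lemma no_ham_path_F8_1:
  assumes "m \<ge> 3"
  shows "\<not> ham_path (C_shape m 3 1 1 1) (m - 1, 1) (m - 1, 3)"
proof
  let ?V = "C_shape m 3 1 1 1"
  assume "ham_path ?V (m - 1, 1) (m - 1, 3)"
  then obtain ps where "ham_path_list ?V (m - 1, 1) (m - 1, 3) ps" using ham_path_iff_list by blast
  then interpret ham_path_list ?V "(m - 1, 1)" "(m - 1, 3)" ps .
  have in_V: "{(1, 2), (m - 1, 1), (m - 1, 2), (m - 1, 3), (m, 1), (m, 3)} \<subseteq> ?V"
    using assms by (auto simp: C_shape_def)
  then have "6 \<le> length ps" using card_le_length[OF in_V] assms by simp
  have "sg_neighbours ?V (m, 1) \<subseteq> {(m - 1, 1), (m - 1, 2)}"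
    by (auto simp: C_shape_def sg_neighbours_def sg_adj_def)
  then have "pos (m - 1, 2) = 2" using path_neighbours_after_start in_V by auto
  moreover have "sg_neighbours ?V (m, 3) \<subseteq> {(m - 1, 2), (m - 1, 3)}"
    by (auto simp: C_shape_def sg_neighbours_def sg_adj_def)
  then have "pos (m - 1, 2) + 3 = length ps" using path_neighbours_before_end in_V by auto
  ultimately show False using \<open>6 \<le> length ps\<close> by simp
qed

lemma no_ham_path_F8_2: "\<not> ham_path (C_shape 3 3 1 1 1) (1, 1) (2, 3)"
proof
  let ?V = "C_shape 3 3 1 1 1"
  assume "ham_path ?V (1, 1) (2, 3)"
  then obtain ps where "ham_path_list ?V (1, 1) (2, 3) ps" using ham_path_iff_list by blast
  then interpret ham_path_list ?V "(1, 1)" "(2, 3)" ps .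
  have in_V: "{(1, 3), (2, 1), (2, 2), (2, 3), (3, 1), (3, 3)} \<subseteq> ?V"
    by (auto simp: C_shape_def)
  have "sg_neighbours ?V (3, 3) \<subseteq> {(2, 2), (2, 3)}"
    by (auto simp: C_shape_def sg_neighbours_def sg_adj_def)
  then have end_segment: "pos (3, 3) + 2 = length ps" "pos (2, 2) + 3 = length ps"
    using path_neighbours_before_end in_V by auto
  have "sg_neighbours ?V (3, 1) \<subseteq> {(2, 1), (2, 2)}"
    by (auto simp: C_shape_def sg_neighbours_def sg_adj_def)
  then have "pos (2, 1) + 1 = pos (3, 1) \<and> pos (2, 2) = pos (3, 1) + 1 \<or>
      pos (2, 2) + 1 = pos (3, 1) \<and> pos (2, 1) = pos (3, 1) + 1"
    using two_path_neighbours in_V by auto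
  moreover have "pos (3, 1) \<noteq> pos (3, 3)" using in_V pos_eq_iff by auto
  ultimately have "pos (3, 1) + 4 = length ps" using end_segment by auto
  have nbrs: "sg_neighbours ?V (1, 3) \<subseteq> {(1, 2), (2, 2), (2, 3)}"
    by (auto simp: C_shape_def sg_neighbours_def sg_adj_def)
  obtain a b where ab: "a \<in> sg_neighbours ?V (1, 3)" "b \<in> sg_neighbours ?V (1, 3)" "a \<noteq> b"
    and pos_ab: "pos a + 1 = pos (1, 3)" "pos b = pos (1, 3) + 1"
    using path_neighbours_interior[of "(1, 3)"] in_V by auto
  have "pos (1, 3) \<noteq> pos (3, 1)" "pos (1, 3) \<noteq> pos (3, 3)" "pos (1, 3) < length ps"
    using in_V pos_eq_iff pos_less by auto
  then have "a \<notin> {(2, 2), (2, 3)}" "b \<notin> {(2, 2), (2, 3)}"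
    using pos_ab pos_end end_segment \<open>pos (3, 1) + 4 = length ps\<close> by auto
  then show False using ab nbrs by blast
qed

lemma no_ham_path_F8_3:
  assumes "m \<ge> 2" "fst s < m - 1"
  shows "\<not> ham_path (C_shape m 3 1 1 1) s (m - 1, 2)"
proof
  let ?V = "C_shape m 3 1 1 1"
  assume "ham_path ?V s (m - 1, 2)"
  then obtain ps where "ham_path_list ?V s (m - 1, 2) ps" using ham_path_iff_list by blast
  then interpret ham_path_list ?V s "(m - 1, 2)" ps .
  have in_V: "(m, 1) \<in> ?V" "(m, 3) \<in> ?V" using assms by (auto simp: C_shape_def)
  have nbrs: "sg_neighbours ?V (m, 1) \<subseteq> {(m - 1, 1), (m - 1, 2)}"
    "sg_neighbours ?V (m, 3) \<subseteq> {(m - 1, 3), (m - 1, 2)}"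
    by (auto simp: C_shape_def sg_neighbours_def sg_adj_def)
  have "(m, 1) \<noteq> s" "(m, 3) \<noteq> s" using assms(2) by auto
  then have "pos (m, 1) + 2 = length ps" "pos (m, 3) + 2 = length ps"
    using path_neighbours_before_end(1)[OF in_V(1) _ _ nbrs(1)]
      path_neighbours_before_end(1)[OF in_V(2) _ _ nbrs(2)] by auto
  then show False using pos_eq_iff[OF in_V] by simp
qed

lemma ham_path_not_F8:
  assumes "ham_path (C_shape m n k l c) s t" "m \<ge> 2"
  shows "\<not> (n = 3 \<and> k = 1 \<and> c = 1 \<and> n - l - c = 1 \<and>
            ((m - k \<ge> 2 \<and> fst s = m - 1 \<and> fst t = m - 1 \<and> \<bar>snd s - snd t\<bar> = 2) \<or>
             (m - k = 2 \<and> fst s = 1 \<and> fst t = 2 \<and> \<bar>snd s - snd t\<bar> = 2) \<or>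
             (m - k > 2 \<and> fst s < m - 1 \<and> t = (m - 1, 2))))"
    (is "\<not> (_ \<and> _ \<and> _ \<and> _ \<and> ?F8)")
proof (rule notI, elim conjE)
  assume "n = 3" "k = 1" "c = 1" "n - l - c = 1" ?F8
  then have hp: "ham_path (C_shape m 3 1 1 1) s t" using assms(1) by simp
  have flipped: "ham_path (C_shape m 3 1 1 1) (flip_rows 3 s) (flip_rows 3 t)"
    using ham_path_flip_rows[OF hp] by simp
  have "snd s \<in> {1..3}" "snd t \<in> {1..3}"
    using ham_path_ends_mem[OF hp] by (auto simp: C_shape_def)
  then have "\<bar>snd s - snd t\<bar> = 2 \<longleftrightarrow> snd s = 1 \<and> snd t = 3 \<or> snd s = 3 \<and> snd t = 1"
    by auto
  with \<open>?F8\<close> \<open>k = 1\<close> consider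
      "m \<ge> 3" "s = (m - 1, 1) \<and> t = (m - 1, 3) \<or> s = (m - 1, 3) \<and> t = (m - 1, 1)"
    | "m = 3" "s = (1, 1) \<and> t = (2, 3) \<or> s = (1, 3) \<and> t = (2, 1)"
    | "m > 3" "fst s < m - 1" "t = (m - 1, 2)"
    by (auto simp: prod_eq_iff)
  then show False
  proof cases
    case 1
    then show False using no_ham_path_F8_1 hp flipped by (auto simp: flip_rows_def)
  next
    case 2
    then show False using no_ham_path_F8_2 hp flipped by (auto simp: flip_rows_def)
  next
    case 3
    then show False using no_ham_path_F8_3 hp assms(2) by auto
  qed
qed

theorem lemma7:
  fixes m n k l c d :: int and s t :: vtx
  assumes "m \<ge> 2" "n \<ge> 3" "k \<ge> 1" "l \<ge> 1" "c \<ge> 1"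
    and "d = n - l - c" "d \<ge> 1" "m - k \<ge> 1"
    and "s \<in> C_shape m n k l c" "t \<in> C_shape m n k l c" "s \<noteq> t"
    and "fst s \<le> fst t"
    and "ham_path (C_shape m n k l c) s t"
  shows "let V = C_shape m n k l c; a = m - k in
     \<not> (cut_vertex V s \<or> cut_vertex V t \<or> vertex_cut V {s, t})
   \<and> \<not> (\<exists>w\<in>V. sg_degree V w = 1 \<and> w \<noteq> s \<and> w \<noteq> t)
   \<and> \<not> (m = 3 \<and> a = 2 \<and>
         ((c = 1 \<and> ({s, t} = {(1,1),(2,2)} \<or> {s, t} = {(1,2),(2,1)})) \<or>
          (d = 1 \<and> ({s, t} = {(1,n),(2,n-1)} \<or> {s, t} = {(1,n-1),(2,n)}))))
   \<and> \<not> (n = 3 \<and> k = 1 \<and> c = 1 \<and> d = 1 \<and>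
         ((a \<ge> 2 \<and> fst s = m - 1 \<and> fst t = m - 1 \<and> \<bar>snd s - snd t\<bar> = 2) \<or>
          (a = 2 \<and> fst s = 1 \<and> fst t = 2 \<and> \<bar>snd s - snd t\<bar> = 2) \<or>
          (a > 2 \<and> fst s < m - 1 \<and> t = (m - 1, 2))))
   \<and> \<not> (a = 1 \<and> ((snd s \<le> c \<and> snd t \<le> c) \<or> (snd s > c + l \<and> snd t > c + l)))"
proof -
  let ?V = "C_shape m n k l c"
  have "n - l - c \<ge> 1" using assms(6,7) by simp
  have "\<not> (\<exists>w\<in>?V. sg_degree ?V w = 1 \<and> w \<noteq> s \<and> w \<noteq> t)"
    using ham_path_interior_degree[OF assms(13)] by fastforce
  with ham_path_connected_Diff_ends[OF assms(13,11)]
    ham_path_not_F7[OF assms(13,12,5,4) \<open>n - l - c \<ge> 1\<close>]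
    ham_path_not_F8[OF assms(13,1)] ham_path_not_F9[OF assms(13,5,4) \<open>n - l - c \<ge> 1\<close>]
  show ?thesis unfolding Let_def cut_vertex_def vertex_cut_def assms(6) by blast
qed

end
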